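(* Let $\Omega$ be a finite set of arbitrary cardinality, $m\in\Delta(\Omega)$, $\lambda\in[0,1)$, and consider the irreducible Markov chain on $\Omega$ with transitions $\pi(\omega\mid\omega)=(1-\lambda)m(\omega)+\lambda$ and $\pi(\omega'\mid\omega)=(1-\lambda)m(\omega')$ for $\omega'\ne\omega$ (so $m$ is invariant and $\phi(p)=m+\lambda(p-m)$). Let $r:\Omega\to\mathbb{R}$ and $\delta\in[0,1)$. If the initial belief is $p_1=m$, then the greedy strategy $\sigma_*$ is optimal at $p_1$.
   Context: Identify each $\omega\in\Omega$ with a unit vector of $\mathbb{R}^\Omega$ and $\Delta(\Omega)$ with the unit simplex. For $p\in\Delta(\Omega)$ let $\langle p,r\rangle=\sum_\omega p(\omega)r(\omega)$; $I=\{p:\langle p,r\rangle\ge0\}$, $J=\Delta(\Omega)\setminus I$. $\phi(q)=qM$ with $M$ the transition matrix. $\mathcal{S}(p)$ is the set of Borel probability measures on $\Delta(\Omega)$ with mean $p$, $\mu_p$ the Dirac mass at $p$. Decision problem from $p_1$: at each stage $n$, at belief $p_n$, the advisor chooses $\mu\in\mathcal{S}(p_n)$ (possibly depending on the past), a posterior $q_n\sim\mu$ is drawn, the stage payoff is $\mathbf{1}_{\{q_n\in I\}}$, and $p_{n+1}=\phi(q_n)$. A strategy's payoff is $\mathbb{E}[(1-\delta)\sum_{n\ge1}\delta^{n-1}\mathbf{1}_{\{q_n\in I\}}]$; $V_\delta(p_1)$ is the maximal payoff; a strategy is optimal at $p_1$ if it achieves $V_\delta(p_1)$. The greedy strategy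 $\sigma_*$: at $p\in I$ choose $\mu_p$; at $p\in J$ choose a two-point splitting $p=a_Iq_I+a_Jq_J$ (posterior $q_I$ w.p. $a_I$, $q_J$ w.p. $a_J$) maximizing $a_I$ subject to $q_I\in I$, $q_J\in\Delta(\Omega)$, $a_I+a_J=1$, $a_I,a_J\ge0$. *)

theory Defs
  imports "HOL-Analysis.Analysis" "HOL-Probability.Probability"
begin

text \<open>Beliefs are vectors in real^'w (Omega = the finite type 'w), Delta(Omega) the unit DeltaOm.\<close>

definition DeltaOm :: "(real^'w::finite) set" where
  "DeltaOm = {p. (\<forall>w. 0 \<le> p $ w) \<and> (\<Sum>w\<in>UNIV. p $ w) = 1}"

definition ip :: "real^'w::finite \<Rightarrow> ('w \<Rightarrow> real) \<Rightarrow> real" where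
  "ip p r = (\<Sum>w\<in>UNIV. p $ w * r w)"

definition setI :: "('w::finite \<Rightarrow> real) \<Rightarrow> (real^'w) set" where
  "setI r = {p \<in> DeltaOm. ip p r \<ge> 0}"

definition setJ :: "('w::finite \<Rightarrow> real) \<Rightarrow> (real^'w) set" where
  "setJ r = DeltaOm - setI r"

text \<open>Transition matrix: row w, column w' is pi(w' | w).\<close>
definition trans_matrix :: "real^'w::finite \<Rightarrow> real \<Rightarrow> real^'w^'w" where
  "trans_matrix m lam = (\<chi> w. \<chi> w'. (1 - lam) * m $ w' + (if w' = w then lam else 0))"

definition irreducible_chain :: "real^'w::finite^'w \<Rightarrow> bool" where
  "irreducible_chain M = (\<forall>i j. (i, j) \<in> {(i, j). 0 < M $ i $ j}\<^sup>*)"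

definition phi :: "real^'w::finite^'w \<Rightarrow> real^'w \<Rightarrow> real^'w" where
  "phi M q = q v* M"

definition Sset :: "real^'w::finite \<Rightarrow> (real^'w) measure set" where
  "Sset p = {\<mu>. sets \<mu> = sets borel \<and> prob_space \<mu> \<and> emeasure \<mu> DeltaOm = 1
                 \<and> (\<integral>q. q \<partial>\<mu>) = p}"

text \<open>Histories of posteriors q_1..q_n (indices 0..n-1).\<close>
definition hist :: "nat \<Rightarrow> (nat \<Rightarrow> real^'w::finite) measure" where
  "hist n = PiM {..<n} (\<lambda>_. borel)"

text \<open>Current belief at stage n+1 (0-indexed stage n) after history h of length n.\<close>
definition belief :: "real^'w::finite^'w \<Rightarrow> real^'w \<Rightarrow> nat \<Rightarrow> (nat \<Rightarrow> real^'w) \<Rightarrow> real^'w" where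
  "belief M p1 n h = (if n = 0 then p1 else phi M (h (n - 1)))"

definition admissible :: "real^'w::finite^'w \<Rightarrow> real^'w \<Rightarrow>
    (nat \<Rightarrow> (nat \<Rightarrow> real^'w) \<Rightarrow> (real^'w) measure) \<Rightarrow> bool" where
  "admissible M p1 \<sigma> = (\<forall>n. \<sigma> n \<in> measurable (hist n) (prob_algebra borel) \<and>
     (\<forall>h\<in>space (hist n). (\<forall>i<n. h i \<in> DeltaOm) \<longrightarrow> \<sigma> n h \<in> Sset (belief M p1 n h)))"

primrec law :: "(nat \<Rightarrow> (nat \<Rightarrow> real^'w::finite) \<Rightarrow> (real^'w) measure) \<Rightarrow> nat
    \<Rightarrow> (nat \<Rightarrow> real^'w) measure" where
  "law \<sigma> 0 = return (hist 0) (\<lambda>_. undefined)"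
| "law \<sigma> (Suc n) = law \<sigma> n \<bind> (\<lambda>h. \<sigma> n h \<bind> (\<lambda>q. return (hist (Suc n)) (h(n := q))))"

text \<open>Expected discounted payoff E[(1-delta) sum_n delta^(n-1) 1{q_n in I}], written
  (by linearity/monotone convergence) as the sum of the stage-wise probabilities.\<close>
definition payoff :: "('w::finite \<Rightarrow> real) \<Rightarrow> real \<Rightarrow>
    (nat \<Rightarrow> (nat \<Rightarrow> real^'w) \<Rightarrow> (real^'w) measure) \<Rightarrow> real" where
  "payoff r \<delta> \<sigma> = (\<Sum>n. (1 - \<delta>) * \<delta> ^ n *
      measure (law \<sigma> (Suc n)) {h \<in> space (hist (Suc n)). h n \<in> setI r})"

definition Vdelta :: "real^'w::finite^'w \<Rightarrow> real^'w \<Rightarrow> ('w \<Rightarrow> real) \<Rightarrow> real \<Rightarrow> real" where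
  "Vdelta M p1 r \<delta> = Sup {payoff r \<delta> \<sigma> | \<sigma>. admissible M p1 \<sigma>}"

definition optimal :: "real^'w::finite^'w \<Rightarrow> real^'w \<Rightarrow> ('w \<Rightarrow> real) \<Rightarrow> real \<Rightarrow>
    (nat \<Rightarrow> (nat \<Rightarrow> real^'w) \<Rightarrow> (real^'w) measure) \<Rightarrow> bool" where
  "optimal M p1 r \<delta> \<sigma> = (admissible M p1 \<sigma> \<and> payoff r \<delta> \<sigma> = Vdelta M p1 r \<delta>)"

definition greedy_choice :: "('w::finite \<Rightarrow> real) \<Rightarrow> real^'w \<Rightarrow> (real^'w) measure \<Rightarrow> bool" where
  "greedy_choice r p \<mu> =
     ((p \<in> setI r \<longrightarrow> \<mu> = return borel p) \<and>
      (p \<in> setJ r \<longrightarrow>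
        (\<exists>aI aJ qI qJ. 0 \<le> aI \<and> 0 \<le> aJ \<and> aI + aJ = 1 \<and> qI \<in> setI r \<and> qJ \<in> DeltaOm \<and>
           p = aI *\<^sub>R qI + aJ *\<^sub>R qJ \<and>
           (\<forall>a' b' q' q''. 0 \<le> a' \<and> 0 \<le> b' \<and> a' + b' = 1 \<and> q' \<in> setI r \<and> q'' \<in> DeltaOm \<and>
               p = a' *\<^sub>R q' + b' *\<^sub>R q'' \<longrightarrow> a' \<le> aI) \<and>
           sets \<mu> = sets borel \<and>
           (\<forall>A\<in>sets borel. emeasure \<mu> A = ennreal (aI * indicator A qI + aJ * indicator A qJ)))))"

definition greedy :: "real^'w::finite^'w \<Rightarrow> real^'w \<Rightarrow> ('w \<Rightarrow> real) \<Rightarrow>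
    (nat \<Rightarrow> (nat \<Rightarrow> real^'w) \<Rightarrow> (real^'w) measure) \<Rightarrow> bool" where
  "greedy M p1 r \<sigma> = (admissible M p1 \<sigma> \<and>
     (\<forall>n. \<forall>h\<in>space (hist n). (\<forall>i<n. h i \<in> DeltaOm) \<longrightarrow>
        greedy_choice r (belief M p1 n h) (\<sigma> n h)))"

end

theory Submission
  imports Defs
begin

text \<open>
  For every strategy the expected posterior at each stage is the invariant distribution m: the
  advisor's splittings preserve the mean and the belief dynamics fix m. Hence any linear function
  \<open>\<langle>q, g\<rangle>\<close> with \<open>g \<ge> 0\<close> that dominates the indicator of I on the simplex bounds every stage payoff
  by \<open>\<langle>m, g\<rangle>\<close>, and a strategy all of whose posteriors satisfy \<open>\<one>\<^sub>I(q) = \<langle>q, g\<rangle>\<close> is optimal.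
  If \<open>m \<in> I\<close>, take \<open>g = 1\<close>: the greedy strategy never moves away from m. If \<open>m \<in> J\<close>, take
  \<open>g = max 0 (1 - r/c)\<close> for a suitable negative reward level c. The beliefs p for which c is a
  cutoff (the states with reward above c plus part of those with reward c carry zero total reward)
  form a convex set containing m; at such p the greedy splitting sends the whole cutoff part of p,
  of mass \<open>\<langle>p, g\<rangle>\<close>, to a posterior with \<open>\<langle>q, g\<rangle> = 1\<close> and the rest to one with \<open>\<langle>q, g\<rangle> = 0\<close>,
  and both posteriors are again cutoff beliefs.
\<close>

section \<open>Beliefs and the belief dynamics\<close>

lemma DeltaOm_borel [measurable]: "DeltaOm \<in> sets (borel :: (real^'w::finite) measure)"
  unfolding DeltaOm_def by measurable

lemma setI_borel [measurable]: "setI r \<in> sets (borel :: (real^'w::finite) measure)"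
  unfolding setI_def ip_def DeltaOm_def by measurable

lemma DeltaOm_sum: "p \<in> DeltaOm \<Longrightarrow> (\<Sum>w\<in>UNIV. p $ w) = 1"
  by (simp add: DeltaOm_def)

lemma DeltaOm_nonneg: "p \<in> DeltaOm \<Longrightarrow> 0 \<le> p $ w"
  by (simp add: DeltaOm_def)

lemma convex_DeltaOm: "convex (DeltaOm :: (real^'w::finite) set)"
proof (rule convexI)
  fix p q :: "real^'w" and u v :: real
  assume "p \<in> DeltaOm" "q \<in> DeltaOm" "0 \<le> u" "0 \<le> v" "u + v = 1"
  then show "u *\<^sub>R p + v *\<^sub>R q \<in> DeltaOm"
    by (simp add: DeltaOm_def sum.distrib flip: sum_distrib_left)
qed

lemma ip_inner: "ip q v = q \<bullet> (\<chi> w. v w)"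
  by (simp add: ip_def inner_vec_def)

lemma ip_lincomb: "ip (a *\<^sub>R p + b *\<^sub>R q) v = a * ip p v + b * ip q v"
  by (simp add: ip_def sum.distrib sum_distrib_left algebra_simps)

lemma ip_scaleR: "ip (a *\<^sub>R p) v = a * ip p v"
  by (simp add: ip_def sum_distrib_left algebra_simps)

lemma ip_affine: "ip q (\<lambda>w. a + b * v w) = a * (\<Sum>w\<in>UNIV. q $ w) + b * ip q v"
  by (simp add: ip_def sum.distrib sum_distrib_left algebra_simps)

lemma ip_const_one: "ip q (\<lambda>_. 1) = (\<Sum>w\<in>UNIV. q $ w)"
  by (simp add: ip_def)

lemma ip_nonneg: "p \<in> DeltaOm \<Longrightarrow> \<forall>w. 0 \<le> v w \<Longrightarrow> 0 \<le> ip p v"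
  unfolding ip_def by (intro sum_nonneg) (simp add: DeltaOm_nonneg)

lemma ip_phi: "ip (phi M q) v = ip q (\<lambda>i. \<Sum>j\<in>UNIV. M $ i $ j * v j)"
proof -
  have "ip (phi M q) v = (\<Sum>j\<in>UNIV. \<Sum>i\<in>UNIV. q $ i * (M $ i $ j * v j))"
    by (simp add: ip_def phi_def vector_matrix_mult_def sum_distrib_left mult_ac)
  also have "\<dots> = (\<Sum>i\<in>UNIV. \<Sum>j\<in>UNIV. q $ i * (M $ i $ j * v j))"
    by (rule sum.swap)
  finally show ?thesis
    by (simp add: ip_def sum_distrib_left)
qed

definition stochastic_matrix :: "real^'w::finite^'w \<Rightarrow> bool" where
  "stochastic_matrix M \<longleftrightarrow> (\<forall>i j. 0 \<le> M $ i $ j) \<and> (\<forall>i. (\<Sum>j\<in>UNIV. M $ i $ j) = 1)"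

lemma phi_DeltaOm:
  assumes M: "stochastic_matrix M" and q: "q \<in> DeltaOm"
  shows "phi M q \<in> DeltaOm"
proof -
  have "0 \<le> phi M q $ j" for j
    using M q unfolding phi_def vector_matrix_mult_def stochastic_matrix_def
    by (auto intro!: sum_nonneg simp: DeltaOm_nonneg)
  moreover have "(\<Sum>j\<in>UNIV. phi M q $ j) = ip (phi M q) (\<lambda>_. 1)"
    by (simp add: ip_def)
  moreover have "\<dots> = ip q (\<lambda>i. \<Sum>j\<in>UNIV. M $ i $ j * 1)"
    by (rule ip_phi)
  moreover have "\<dots> = 1"
    using M q by (simp add: stochastic_matrix_def ip_def DeltaOm_sum)
  ultimately show ?thesis by (simp add: DeltaOm_def)
qed

lemma trans_matrix_stochastic:
  assumes "m \<in> DeltaOm" "0 \<le> lam" "lam \<le> 1"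
  shows "stochastic_matrix (trans_matrix m lam)"
  using assms unfolding stochastic_matrix_def trans_matrix_def
  by (simp add: sum.distrib DeltaOm_nonneg DeltaOm_sum flip: sum_distrib_left)

lemma phi_trans_matrix:
  assumes "q \<in> DeltaOm"
  shows "phi (trans_matrix m lam) q = (1 - lam) *\<^sub>R m + lam *\<^sub>R q"
proof -
  have "(\<Sum>i\<in>UNIV. ((1 - lam) * m $ j + (if j = i then lam else 0)) * q $ i)
      = (1 - lam) * m $ j + lam * q $ j" for j
  proof -
    have "(\<Sum>i\<in>UNIV. ((1 - lam) * m $ j + (if j = i then lam else 0)) * q $ i)
        = (\<Sum>i\<in>UNIV. (1 - lam) * m $ j * q $ i) + (\<Sum>i\<in>UNIV. if j = i then lam * q $ i else 0)"
      by (subst sum.distrib[symmetric]) (rule sum.cong, auto simp: algebra_simps)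
    then show ?thesis
      using assms by (simp add: DeltaOm_sum flip: sum_distrib_left)
  qed
  then show ?thesis
    unfolding phi_def vector_matrix_mult_def trans_matrix_def by (simp add: vec_eq_iff mult.commute)
qed

lemma phi_trans_matrix_fixed: "m \<in> DeltaOm \<Longrightarrow> phi (trans_matrix m lam) m = m"
  by (simp add: phi_trans_matrix flip: scaleR_add_left)

section \<open>Histories and the law of play\<close>

lemma space_hist_not_empty: "space (hist n :: (nat \<Rightarrow> real^'w::finite) measure) \<noteq> {}"
  unfolding hist_def by (simp add: space_PiM_empty_iff)

lemma fun_upd_in_space_hist:
  assumes "h \<in> space (hist n :: (nat \<Rightarrow> real^'w::finite) measure)"
  shows "h(n := q) \<in> space (hist (Suc n))"
  using assms unfolding hist_def by (auto simp: space_PiM PiE_def extensional_def)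

lemma measurable_hist_component [measurable]:
  "n < k \<Longrightarrow> (\<lambda>h. h n) \<in> measurable (hist k :: (nat \<Rightarrow> real^'w::finite) measure) borel"
  unfolding hist_def by (intro measurable_component_singleton) auto

lemma measurable_return_fun_upd:
  assumes "h \<in> space (hist n :: (nat \<Rightarrow> real^'w::finite) measure)"
  shows "(\<lambda>q. return (hist (Suc n)) (h(n := q))) \<in> measurable borel (subprob_algebra (hist (Suc n)))"
proof (rule measurable_compose[OF _ return_measurable])
  show "(\<lambda>q::real^'w. h(n := q)) \<in> measurable borel (hist (Suc n))"
    unfolding hist_def
    by (rule measurable_fun_upd[where J="{..<n}"]) (use assms in \<open>auto simp: hist_def\<close>)
qed

lemma sets_strategy:
  assumes "s \<in> measurable (hist n) (prob_algebra (borel :: (real^'w::finite) measure))"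
    and "h \<in> space (hist n)"
  shows "sets (s h) = sets borel"
  using assms measurable_space[of s "hist n" "prob_algebra borel" h]
  by (auto simp: space_prob_algebra)

lemma measurable_return_fun_upd_strategy:
  assumes "s \<in> measurable (hist n) (prob_algebra (borel :: (real^'w::finite) measure))"
    and "h \<in> space (hist n)"
  shows "(\<lambda>q. return (hist (Suc n)) (h(n := q))) \<in> measurable (s h) (subprob_algebra (hist (Suc n)))"
  by (subst measurable_cong_sets[OF sets_strategy[OF assms] refl])
    (rule measurable_return_fun_upd[OF assms(2)])

lemma measurable_stage_kernel:
  assumes "s \<in> measurable (hist n) (prob_algebra (borel :: (real^'w::finite) measure))"
  shows "(\<lambda>h. s h \<bind> (\<lambda>q. return (hist (Suc n)) (h(n := q))))
    \<in> measurable (hist n) (subprob_algebra (hist (Suc n)))"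
proof (rule measurable_bind')
  show "s \<in> measurable (hist n) (subprob_algebra borel)"
    using assms by (rule measurable_prob_algebraD)
  have upd: "(\<lambda>x::(nat \<Rightarrow> real^'w) \<times> (real^'w). (fst x)(n := snd x))
      \<in> measurable (hist n \<Otimes>\<^sub>M borel) (hist (Suc n))"
    unfolding hist_def by (rule measurable_fun_upd[where J="{..<n}"]) auto
  show "(\<lambda>(h :: nat \<Rightarrow> real^'w, q :: real^'w). return (hist (Suc n)) (h(n := q)))
      \<in> measurable (hist n \<Otimes>\<^sub>M borel) (subprob_algebra (hist (Suc n)))"
    unfolding split_beta' by (rule measurable_compose[OF upd]) (rule return_measurable)
qed

lemma admissibleD_measurable:
  "admissible M p1 \<sigma> \<Longrightarrow> \<sigma> n \<in> measurable (hist n) (prob_algebra (borel :: (real^'w::finite) measure))"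
  by (simp add: admissible_def)

declare law.simps(2) [simp del]

context
  fixes \<sigma> :: "nat \<Rightarrow> (nat \<Rightarrow> real^'w::finite) \<Rightarrow> (real^'w) measure"
  assumes meas: "\<And>n. \<sigma> n \<in> measurable (hist n) (prob_algebra borel)"
begin

lemma sets_law: "sets (law \<sigma> n) = sets (hist n)"
proof (induction n)
  case (Suc n)
  have "(\<lambda>h. \<sigma> n h \<bind> (\<lambda>q. return (hist (Suc n)) (h(n := q))))
      \<in> measurable (law \<sigma> n) (subprob_algebra (hist (Suc n)))"
    using measurable_stage_kernel[OF meas] by (simp add: measurable_cong_sets[OF Suc refl])
  moreover have "space (law \<sigma> n) \<noteq> {}"
    using sets_eq_imp_space_eq[OF Suc] space_hist_not_empty by auto
  ultimately show ?case by (simp add: sets_bind_measurable law.simps)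
qed simp

lemma space_law: "space (law \<sigma> n) = space (hist n)"
  using sets_eq_imp_space_eq[OF sets_law] .

lemma measurable_stage_kernel_law:
  "(\<lambda>h. \<sigma> n h \<bind> (\<lambda>q. return (hist (Suc n)) (h(n := q))))
    \<in> measurable (law \<sigma> n) (subprob_algebra (hist (Suc n)))"
  using measurable_stage_kernel[OF meas] by (simp add: measurable_cong_sets[OF sets_law refl])

lemma AE_law_invariant:
  assumes P: "P \<in> sets borel"
    and step: "\<And>n h. h \<in> space (hist n) \<Longrightarrow> \<forall>i<n. h i \<in> P \<Longrightarrow> AE q in \<sigma> n h. q \<in> P"
  shows "AE h in law \<sigma> n. \<forall>i<n. h i \<in> P"
proof (induction n)
  case (Suc n)
  have pred: "Measurable.pred (hist (Suc n)) (\<lambda>h. \<forall>i<Suc n. h i \<in> P)"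
    using P by measurable
  have "AE h in law \<sigma> n. AE y in \<sigma> n h \<bind> (\<lambda>q. return (hist (Suc n)) (h(n := q))).
      \<forall>i<Suc n. y i \<in> P"
    using Suc AE_space
  proof eventually_elim
    case (elim h)
    then have h: "h \<in> space (hist n)" by (simp add: space_law)
    note hP = elim(1)
    have "AE q in \<sigma> n h. AE y in return (hist (Suc n)) (h(n := q)). \<forall>i<Suc n. y i \<in> P"
      using step[OF h hP]
    proof eventually_elim
      case (elim q)
      then have "\<forall>i<Suc n. (h(n := q)) i \<in> P" using hP by (auto simp: less_Suc_eq)
      then show ?case using AE_return[OF fun_upd_in_space_hist[OF h] pred] by blast
    qed
    then show ?case
      using AE_bind[OF measurable_return_fun_upd_strategy[OF meas h] pred] by auto
  qed
  then show ?case
    unfolding law.simps AE_bind[OF measurable_stage_kernel_law pred] .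
qed simp

end

section \<open>Expected posteriors and the payoff bound\<close>

lemma AE_Sset_DeltaOm:
  assumes "\<mu> \<in> Sset p"
  shows "AE q in \<mu>. q \<in> DeltaOm"
proof -
  from assms have "prob_space \<mu>" "measure \<mu> DeltaOm = 1"
    by (auto simp: Sset_def measure_def)
  then show ?thesis using prob_space.AE_prob_1 by blast
qed

text \<open>The hypothesis \<open>p \<in> DeltaOm\<close> excludes \<open>p = 0\<close>, the junk value of a non-integrable mean.\<close>

lemma nn_integral_ip_Sset:
  assumes \<mu>: "\<mu> \<in> Sset p" and p: "p \<in> DeltaOm" and v: "\<forall>w. 0 \<le> v w"
  shows "(\<integral>\<^sup>+q. ennreal (ip q v) \<partial>\<mu>) = ennreal (ip p v)"
proof -
  from \<mu> have mean: "(\<integral>q. q \<partial>\<mu>) = p" by (simp add: Sset_def)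
  have "integrable \<mu> (\<lambda>q. q)"
  proof (rule ccontr)
    assume "\<not> integrable \<mu> (\<lambda>q. q)"
    then have "p = 0" using mean not_integrable_integral_eq by metis
    then show False using DeltaOm_sum[OF p] by simp
  qed
  then have "integrable \<mu> (\<lambda>q. ip q v)" and "(\<integral>q. ip q v \<partial>\<mu>) = ip p v"
    using mean by (simp_all add: ip_inner)
  moreover have "AE q in \<mu>. 0 \<le> ip q v"
    using AE_Sset_DeltaOm[OF \<mu>] by eventually_elim (rule ip_nonneg[OF _ v])
  ultimately show ?thesis by (simp add: nn_integral_eq_integral)
qed

lemma AE_law_DeltaOm:
  fixes \<sigma> :: "nat \<Rightarrow> (nat \<Rightarrow> real^'w::finite) \<Rightarrow> (real^'w) measure"
  assumes adm: "admissible M p1 \<sigma>"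
  shows "AE h in law \<sigma> n. \<forall>i<n. h i \<in> DeltaOm"
proof (rule AE_law_invariant[OF admissibleD_measurable[OF adm] DeltaOm_borel])
  fix n and h :: "nat \<Rightarrow> real^'w" assume "h \<in> space (hist n)" "\<forall>i<n. h i \<in> DeltaOm"
  then have "\<sigma> n h \<in> Sset (belief M p1 n h)" using adm by (auto simp: admissible_def)
  then show "AE q in \<sigma> n h. q \<in> DeltaOm" by (rule AE_Sset_DeltaOm)
qed

lemma belief_DeltaOm:
  assumes "stochastic_matrix M" "p1 \<in> DeltaOm" "\<forall>i<n. h i \<in> DeltaOm"
  shows "belief M p1 n h \<in> DeltaOm"
  using assms by (cases n) (simp_all add: belief_def phi_DeltaOm)

lemma measurable_ip_hist [measurable]:
  assumes "n < k"
  shows "(\<lambda>h. ennreal (ip (h n) v)) \<in> borel_measurable (hist k :: (nat \<Rightarrow> real^'w::finite) measure)"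
proof -
  have "(\<lambda>q::real^'w. ennreal (ip q v)) \<in> borel_measurable borel"
    unfolding ip_def by measurable
  then show ?thesis
    using measurable_compose[OF measurable_hist_component[OF assms]] by blast
qed

lemma nn_integral_ip_law_Suc:
  assumes adm: "admissible M p1 \<sigma>" and M: "stochastic_matrix M" and p1: "p1 \<in> DeltaOm"
    and v: "\<forall>w. 0 \<le> v w"
  shows "(\<integral>\<^sup>+h. ennreal (ip (h n) v) \<partial>law \<sigma> (Suc n))
       = (\<integral>\<^sup>+h. ennreal (ip (belief M p1 n h) v) \<partial>law \<sigma> n)"
proof -
  note meas = admissibleD_measurable[OF adm]
  have "(\<integral>\<^sup>+h. ennreal (ip (h n) v) \<partial>law \<sigma> (Suc n))
      = (\<integral>\<^sup>+h. \<integral>\<^sup>+y. ennreal (ip (y n) v)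
          \<partial>(\<sigma> n h \<bind> (\<lambda>q. return (hist (Suc n)) (h(n := q)))) \<partial>law \<sigma> n)"
    unfolding law.simps
    by (rule nn_integral_bind[OF measurable_ip_hist measurable_stage_kernel_law[OF meas]]) simp
  also have "\<dots> = (\<integral>\<^sup>+h. ennreal (ip (belief M p1 n h) v) \<partial>law \<sigma> n)"
  proof (rule nn_integral_cong_AE)
    show "AE h in law \<sigma> n. (\<integral>\<^sup>+y. ennreal (ip (y n) v)
        \<partial>(\<sigma> n h \<bind> (\<lambda>q. return (hist (Suc n)) (h(n := q))))) = ennreal (ip (belief M p1 n h) v)"
      using AE_law_DeltaOm[OF adm, of n] AE_space
    proof eventually_elim
      case (elim h)
      then have h: "h \<in> space (hist n)" by (simp add: space_law[OF meas])
      have "(\<integral>\<^sup>+y. ennreal (ip (y n) v) \<partial>(\<sigma> n h \<bind> (\<lambda>q. return (hist (Suc n)) (h(n := q)))))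
          = (\<integral>\<^sup>+q. \<integral>\<^sup>+y. ennreal (ip (y n) v) \<partial>return (hist (Suc n)) (h(n := q)) \<partial>\<sigma> n h)"
        by (rule nn_integral_bind[OF measurable_ip_hist measurable_return_fun_upd_strategy[OF meas h]])
          simp
      also have "\<dots> = (\<integral>\<^sup>+q. ennreal (ip q v) \<partial>\<sigma> n h)"
        by (simp add: nn_integral_return[OF fun_upd_in_space_hist[OF h]])
      also have "\<dots> = ennreal (ip (belief M p1 n h) v)"
        using adm h elim(1) belief_DeltaOm[OF M p1 elim(1)] v
        by (intro nn_integral_ip_Sset) (auto simp: admissible_def)
      finally show ?case .
    qed
  qed
  finally show ?thesis .
qed

lemma nn_integral_ip_law_invariant:
  fixes m :: "real^'w::finite"
  assumes adm: "admissible M m \<sigma>" and M: "stochastic_matrix M" "phi M m = m" and m: "m \<in> DeltaOm"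
    and v: "\<forall>w. 0 \<le> v w"
  shows "(\<integral>\<^sup>+h. ennreal (ip (h n) v) \<partial>law \<sigma> (Suc n)) = ennreal (ip m v)"
  using v
proof (induction n arbitrary: v)
  case 0
  have "(\<integral>\<^sup>+h. ennreal (ip (h 0) v) \<partial>law \<sigma> (Suc 0))
      = (\<integral>\<^sup>+h. ennreal (ip (belief M m 0 h) v) \<partial>law \<sigma> 0)"
    by (rule nn_integral_ip_law_Suc[OF adm M(1) m 0])
  also have "\<dots> = ennreal (ip m v)"
  proof -
    have "(\<lambda>_. undefined) \<in> space (hist 0 :: (nat \<Rightarrow> real^'w) measure)"
      by (simp add: hist_def space_PiM_empty)
    then show ?thesis
      using nn_integral_return[of _ _ "\<lambda>_. ennreal (ip m v)"] by (simp add: belief_def)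
  qed
  finally show ?case .
next
  case (Suc n)
  define Mv where "Mv = (\<lambda>i. \<Sum>j\<in>UNIV. M $ i $ j * v j)"
  have Mv: "\<forall>i. 0 \<le> Mv i"
    using M(1) Suc.prems by (auto simp: Mv_def stochastic_matrix_def intro!: sum_nonneg)
  have "(\<integral>\<^sup>+h. ennreal (ip (h (Suc n)) v) \<partial>law \<sigma> (Suc (Suc n)))
      = (\<integral>\<^sup>+h. ennreal (ip (phi M (h n)) v) \<partial>law \<sigma> (Suc n))"
    using nn_integral_ip_law_Suc[OF adm M(1) m Suc.prems] by (simp add: belief_def)
  also have "\<dots> = (\<integral>\<^sup>+h. ennreal (ip (h n) Mv) \<partial>law \<sigma> (Suc n))"
    by (simp add: ip_phi Mv_def)
  also have "\<dots> = ennreal (ip m Mv)"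
    using Suc.IH[OF Mv] .
  also have "\<dots> = ennreal (ip m v)"
    using M(2) by (simp add: Mv_def flip: ip_phi)
  finally show ?case .
qed

lemma stage_event_sets:
  "{h \<in> space (hist (Suc n)). h n \<in> setI r} \<in> sets (hist (Suc n) :: (nat \<Rightarrow> real^'w::finite) measure)"
  by measurable

lemma emeasure_stage_event:
  assumes adm: "admissible M p1 \<sigma>"
  shows "emeasure (law \<sigma> (Suc n)) {h \<in> space (hist (Suc n)). h n \<in> setI r}
    = (\<integral>\<^sup>+h. indicator (setI r) (h n) \<partial>law \<sigma> (Suc n))"
proof -
  note space = space_law[OF admissibleD_measurable[OF adm]]
  have "{h \<in> space (hist (Suc n)). h n \<in> setI r} \<in> sets (law \<sigma> (Suc n))"
    using stage_event_sets sets_law[OF admissibleD_measurable[OF adm]] by blast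
  then show ?thesis
    by (simp flip: nn_integral_indicator add: space)
      (rule nn_integral_cong, simp add: space indicator_def)
qed

lemma stage_prob_le:
  assumes adm: "admissible M m \<sigma>" and M: "stochastic_matrix M" "phi M m = m" and m: "m \<in> DeltaOm"
    and g: "\<forall>w. 0 \<le> g w" and gI: "\<forall>q\<in>setI r. 1 \<le> ip q g"
  shows "measure (law \<sigma> (Suc n)) {h \<in> space (hist (Suc n)). h n \<in> setI r} \<le> ip m g"
proof -
  have "emeasure (law \<sigma> (Suc n)) {h \<in> space (hist (Suc n)). h n \<in> setI r}
      = (\<integral>\<^sup>+h. indicator (setI r) (h n) \<partial>law \<sigma> (Suc n))"
    by (rule emeasure_stage_event[OF adm])
  also have "\<dots> \<le> (\<integral>\<^sup>+h. ennreal (ip (h n) g) \<partial>law \<sigma> (Suc n))"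
    using gI by (intro nn_integral_mono) (auto simp: indicator_def)
  also have "\<dots> = ennreal (ip m g)"
    by (rule nn_integral_ip_law_invariant[OF adm M m g])
  finally show ?thesis
    unfolding measure_def using ip_nonneg[OF m g] by (intro enn2real_leI) auto
qed

lemma stage_prob_eq:
  assumes adm: "admissible M m \<sigma>" and M: "stochastic_matrix M" "phi M m = m" and m: "m \<in> DeltaOm"
    and g: "\<forall>w. 0 \<le> g w"
    and attained: "AE h in law \<sigma> (Suc n). indicator (setI r) (h n) = ip (h n) g"
  shows "measure (law \<sigma> (Suc n)) {h \<in> space (hist (Suc n)). h n \<in> setI r} = ip m g"
proof -
  have "emeasure (law \<sigma> (Suc n)) {h \<in> space (hist (Suc n)). h n \<in> setI r}
      = (\<integral>\<^sup>+h. indicator (setI r) (h n) \<partial>law \<sigma> (Suc n))"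
    by (rule emeasure_stage_event[OF adm])
  also have "\<dots> = (\<integral>\<^sup>+h. ennreal (ip (h n) g) \<partial>law \<sigma> (Suc n))"
    using attained
    by (intro nn_integral_cong_AE) (auto elim!: eventually_mono simp: indicator_def split: if_splits)
  also have "\<dots> = ennreal (ip m g)"
    by (rule nn_integral_ip_law_invariant[OF adm M m g])
  finally show ?thesis
    unfolding measure_def using ip_nonneg[OF m g] by simp
qed

lemma sums_discounted_const:
  assumes "0 \<le> \<delta>" "\<delta> < (1::real)"
  shows "(\<lambda>n. (1 - \<delta>) * \<delta> ^ n * G) sums G"
proof -
  have "(\<lambda>n. ((1 - \<delta>) * G) * \<delta> ^ n) sums (((1 - \<delta>) * G) * (1 / (1 - \<delta>)))"
    using assms by (intro sums_mult geometric_sums) auto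
  moreover have "((1 - \<delta>) * G) * (1 / (1 - \<delta>)) = G"
    using assms by simp
  ultimately show ?thesis
    by (simp add: algebra_simps)
qed

lemma suminf_discounted_le:
  assumes d: "0 \<le> \<delta>" "\<delta> < (1::real)" and a: "\<And>n. 0 \<le> a n" "\<And>n. a n \<le> G"
  shows "(\<Sum>n. (1 - \<delta>) * \<delta> ^ n * a n) \<le> G"
proof -
  have G: "(\<lambda>n. (1 - \<delta>) * \<delta> ^ n * G) sums G"
    by (rule sums_discounted_const[OF d])
  have le: "(1 - \<delta>) * \<delta> ^ n * a n \<le> (1 - \<delta>) * \<delta> ^ n * G" for n
    using d a by (intro mult_left_mono) auto
  have "summable (\<lambda>n. (1 - \<delta>) * \<delta> ^ n * a n)"
    using d a le by (intro summable_comparison_test'[OF sums_summable[OF G]]) auto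
  then show ?thesis
    using suminf_le[OF le _ sums_summable[OF G]] sums_unique[OF G] by simp
qed

lemma optimal_if_majorant_attained:
  assumes M: "stochastic_matrix M" "phi M m = m" and m: "m \<in> DeltaOm" and d: "0 \<le> \<delta>" "\<delta> < 1"
    and g: "\<forall>w. 0 \<le> g w" and gI: "\<forall>q\<in>setI r. 1 \<le> ip q g"
    and adm: "admissible M m \<sigma>"
    and attained: "\<And>n. AE h in law \<sigma> (Suc n). indicator (setI r) (h n) = ip (h n) g"
  shows "optimal M m r \<delta> \<sigma>"
proof -
  have payoff: "payoff r \<delta> \<sigma> = ip m g"
    unfolding payoff_def stage_prob_eq[OF adm M m g attained]
    by (rule sums_unique[OF sums_discounted_const[OF d], symmetric])
  have "payoff r \<delta> \<tau> \<le> ip m g" if "admissible M m \<tau>" for \<tau>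
    unfolding payoff_def
    by (rule suminf_discounted_le[OF d measure_nonneg stage_prob_le[OF that M m g gI]])
  then have "Vdelta M m r \<delta> = ip m g"
    unfolding Vdelta_def using adm payoff by (intro cSup_eq_maximum) (auto intro!: exI[of _ \<sigma>])
  then show ?thesis
    using adm payoff by (simp add: optimal_def)
qed

section \<open>Greedy strategies\<close>

lemma AE_two_point:
  fixes \<mu> :: "'a::topological_space measure"
  assumes sets: "sets \<mu> = sets borel" and P: "P \<in> sets borel"
    and two_point: "\<forall>A\<in>sets borel. emeasure \<mu> A = ennreal (a * indicator A x + b * indicator A y)"
    and "a \<noteq> 0 \<Longrightarrow> x \<in> P" "b \<noteq> 0 \<Longrightarrow> y \<in> P"
  shows "AE q in \<mu>. q \<in> P"
proof -
  have "UNIV - P \<in> sets \<mu>" and space: "space \<mu> = UNIV"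
    using sets P sets_eq_imp_space_eq[OF sets] by auto
  moreover have "emeasure \<mu> (UNIV - P) = 0"
    using two_point P assms(4,5) by (cases "a = 0"; cases "b = 0") auto
  ultimately show ?thesis
    by (subst AE_iff_measurable[of "UNIV - P"]) auto
qed

lemma AE_return_borel:
  assumes "P \<in> sets borel" "x \<in> P"
  shows "AE q in return borel x. q \<in> P"
  using AE_return[OF _ pred_sets2[OF assms(1) measurable_id]] assms(2) by simp

lemma AE_law_greedy_invariant:
  fixes \<sigma> :: "nat \<Rightarrow> (nat \<Rightarrow> real^'w::finite) \<Rightarrow> (real^'w) measure"
  assumes greedy: "greedy M p1 r \<sigma>" and P: "P \<in> sets borel" "P \<subseteq> DeltaOm"
    and K: "p1 \<in> K" "\<And>q. q \<in> P \<Longrightarrow> phi M q \<in> K"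
    and choice: "\<And>p \<mu>. p \<in> K \<Longrightarrow> sets \<mu> = sets borel \<Longrightarrow> greedy_choice r p \<mu> \<Longrightarrow> AE q in \<mu>. q \<in> P"
  shows "AE h in law \<sigma> n. \<forall>i<n. h i \<in> P"
proof -
  have adm: "admissible M p1 \<sigma>"
    using greedy by (simp add: greedy_def)
  show ?thesis
  proof (rule AE_law_invariant[OF admissibleD_measurable[OF adm] P(1)])
    fix n and h :: "nat \<Rightarrow> real^'w" assume h: "h \<in> space (hist n)" and hP: "\<forall>i<n. h i \<in> P"
    have "belief M p1 n h \<in> K"
      using K hP by (cases n) (auto simp: belief_def)
    moreover have "sets (\<sigma> n h) = sets borel"
      by (rule sets_strategy[OF admissibleD_measurable[OF adm] h])
    moreover have "greedy_choice r (belief M p1 n h) (\<sigma> n h)"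
      using greedy h hP P(2) unfolding greedy_def by blast
    ultimately show "AE q in \<sigma> n h. q \<in> P"
      by (rule choice)
  qed
qed

lemma greedy_optimal_if_invariant_in_setI:
  fixes m :: "real^'w::finite"
  assumes M: "stochastic_matrix M" "phi M m = m" and m: "m \<in> setI r"
    and d: "0 \<le> \<delta>" "\<delta> < 1" and greedy: "greedy M m r \<sigma>"
  shows "optimal M m r \<delta> \<sigma>"
proof -
  have mD: "m \<in> DeltaOm"
    using m by (simp add: setI_def)
  have stays: "AE h in law \<sigma> n. \<forall>i<n. h i \<in> {m}" for n
  proof (rule AE_law_greedy_invariant[OF greedy, where K="{m}"])
    fix p and \<mu> :: "(real^'w) measure"
    assume "p \<in> {m}" "greedy_choice r p \<mu>"
    then have \<mu>: "\<mu> = return borel m"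
      using m by (simp add: greedy_choice_def)
    show "AE q in \<mu>. q \<in> {m}"
      unfolding \<mu> by (rule AE_return_borel) auto
  qed (use mD M(2) in auto)
  show ?thesis
  proof (rule optimal_if_majorant_attained[OF M mD d _ _ greedy[unfolded greedy_def, THEN conjunct1]])
    show "AE h in law \<sigma> (Suc n). indicator (setI r) (h n) = ip (h n) (\<lambda>_. 1)" for n
      using stays[of "Suc n"] by eventually_elim (simp add: m ip_const_one DeltaOm_sum[OF mD])
  qed (auto simp: ip_const_one DeltaOm_sum setI_def)
qed

section \<open>Cutoff beliefs\<close>

definition cutoff_weight :: "('w::finite \<Rightarrow> real) \<Rightarrow> real \<Rightarrow> 'w \<Rightarrow> real" where
  "cutoff_weight r c w = max 0 (1 - r w / c)"

definition reward_above :: "('w::finite \<Rightarrow> real) \<Rightarrow> real \<Rightarrow> real^'w \<Rightarrow> real" where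
  "reward_above r c p = (\<Sum>w\<in>UNIV. if c < r w then p $ w * r w else 0)"

definition reward_from :: "('w::finite \<Rightarrow> real) \<Rightarrow> real \<Rightarrow> real^'w \<Rightarrow> real" where
  "reward_from r c p = (\<Sum>w\<in>UNIV. if c \<le> r w then p $ w * r w else 0)"

definition mass_above :: "('w::finite \<Rightarrow> real) \<Rightarrow> real \<Rightarrow> real^'w \<Rightarrow> real" where
  "mass_above r c p = (\<Sum>w\<in>UNIV. if c < r w then p $ w else 0)"

definition mass_at :: "('w::finite \<Rightarrow> real) \<Rightarrow> real \<Rightarrow> real^'w \<Rightarrow> real" where
  "mass_at r c p = (\<Sum>w\<in>UNIV. if r w = c then p $ w else 0)"

text \<open>\<open>p \<in> cutoff_set r c\<close> means that the states with reward above c together with a fraction of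
  those with reward exactly c carry total reward zero under p. This part of p is the largest one
  that can be split off into a posterior in I, and its mass is \<open>\<langle>p, cutoff_weight r c\<rangle>\<close>.\<close>

definition cutoff_set :: "('w::finite \<Rightarrow> real) \<Rightarrow> real \<Rightarrow> (real^'w) set" where
  "cutoff_set r c = {p \<in> DeltaOm. 0 \<le> reward_above r c p \<and> reward_from r c p \<le> 0}"

lemma cutoff_weight_nonneg: "0 \<le> cutoff_weight r c w"
  by (simp add: cutoff_weight_def)

lemma cutoff_weight_above: "c < 0 \<Longrightarrow> c < r w \<Longrightarrow> cutoff_weight r c w = 1 - r w / c"
  by (simp add: cutoff_weight_def divide_less_eq)

lemma cutoff_weight_below: "c < 0 \<Longrightarrow> r w \<le> c \<Longrightarrow> cutoff_weight r c w = 0"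
  by (simp add: cutoff_weight_def le_divide_eq)

lemma reward_from_eq: "reward_from r c p = reward_above r c p + c * mass_at r c p"
  unfolding reward_above_def reward_from_def mass_at_def sum_distrib_left sum.distrib[symmetric]
  by (rule sum.cong) auto

lemma mass_at_nonneg: "p \<in> DeltaOm \<Longrightarrow> 0 \<le> mass_at r c p"
  unfolding mass_at_def by (intro sum_nonneg) (simp add: DeltaOm_nonneg)

lemma ip_cutoff_weight:
  assumes "c < 0"
  shows "ip p (cutoff_weight r c) = mass_above r c p - reward_above r c p / c"
proof -
  have "p $ w * cutoff_weight r c w
      = (if c < r w then p $ w else 0) - (if c < r w then p $ w * r w else 0) / c" for w
    using assms by (cases "c < r w") (simp_all add: cutoff_weight_above cutoff_weight_below field_simps)
  then show ?thesis
    unfolding ip_def mass_above_def reward_above_def by (simp add: sum_subtractf sum_divide_distrib)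
qed

lemma ip_cutoff_weight_ge_one:
  assumes c: "c < 0" and q: "q \<in> setI r"
  shows "1 \<le> ip q (cutoff_weight r c)"
proof -
  have qD: "q \<in> DeltaOm" and qr: "0 \<le> ip q r"
    using q by (auto simp: setI_def)
  have "1 \<le> 1 + (- 1 / c) * ip q r"
    using c qr by (simp add: divide_nonneg_neg)
  also have "\<dots> = ip q (\<lambda>w. 1 + (- 1 / c) * r w)"
    using ip_affine[of q 1 "- 1 / c" r] DeltaOm_sum[OF qD] by simp
  also have "\<dots> \<le> ip q (cutoff_weight r c)"
    unfolding ip_def using DeltaOm_nonneg[OF qD]
    by (intro sum_mono mult_left_mono) (auto simp: cutoff_weight_def)
  finally show ?thesis .
qed

lemma reward_above_lincomb:
  "reward_above r c (a *\<^sub>R p + b *\<^sub>R q) = a * reward_above r c p + b * reward_above r c q"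
  unfolding reward_above_def sum_distrib_left sum.distrib[symmetric]
  by (rule sum.cong) (auto simp: algebra_simps)

lemma reward_from_lincomb:
  "reward_from r c (a *\<^sub>R p + b *\<^sub>R q) = a * reward_from r c p + b * reward_from r c q"
  unfolding reward_from_def sum_distrib_left sum.distrib[symmetric]
  by (rule sum.cong) (auto simp: algebra_simps)

lemma convex_cutoff_set: "convex (cutoff_set r c :: (real^'w::finite) set)"
proof (rule convexI)
  fix p q :: "real^'w" and u v :: real
  assume p: "p \<in> cutoff_set r c" and q: "q \<in> cutoff_set r c" and uv: "0 \<le> u" "0 \<le> v" "u + v = 1"
  then have "u *\<^sub>R p + v *\<^sub>R q \<in> DeltaOm"
    by (intro convexD[OF convex_DeltaOm]) (auto simp: cutoff_set_def)
  moreover have "0 \<le> u * reward_above r c p + v * reward_above r c q"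
    using p q uv by (auto simp: cutoff_set_def)
  moreover have "u * reward_from r c p + v * reward_from r c q \<le> 0"
    using p q uv by (auto simp: cutoff_set_def intro!: add_nonpos_nonpos mult_nonneg_nonpos)
  ultimately show "u *\<^sub>R p + v *\<^sub>R q \<in> cutoff_set r c"
    by (simp add: cutoff_set_def reward_above_lincomb reward_from_lincomb)
qed

lemma exists_fraction:
  assumes "0 \<le> a" "a \<le> (b::real)"
  obtains \<theta> where "0 \<le> \<theta>" "\<theta> \<le> 1" "\<theta> * b = a"
proof (cases "b = 0")
  case True
  then show ?thesis using assms that[of 0] by simp
next
  case False
  then show ?thesis using assms that[of "a / b"] by simp
qed

lemma cutoff_set_submass:
  assumes c: "c < 0" and p: "p \<in> cutoff_set r c"
  obtains x :: "real^'w::finite"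
  where "\<forall>w. 0 \<le> x $ w \<and> x $ w \<le> p $ w" "0 \<le> ip x r" "(\<Sum>w\<in>UNIV. x $ w) = ip p (cutoff_weight r c)"
proof -
  have pD: "p \<in> DeltaOm" and above: "0 \<le> reward_above r c p" and from_le: "reward_from r c p \<le> 0"
    using p by (auto simp: cutoff_set_def)
  define Z where "Z = mass_at r c p"
  have "reward_above r c p \<le> - c * Z"
    using from_le reward_from_eq[of r c p] by (simp add: Z_def)
  then obtain \<theta> where \<theta>: "0 \<le> \<theta>" "\<theta> \<le> 1" "\<theta> * (- c * Z) = reward_above r c p"
    using above exists_fraction by blast
  define x :: "real^'w" where
    "x = (\<chi> w. if c < r w then p $ w else if r w = c then \<theta> * p $ w else 0)"
  show thesis
  proof
    show "\<forall>w. 0 \<le> x $ w \<and> x $ w \<le> p $ w"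
      using \<theta> DeltaOm_nonneg[OF pD] by (auto simp: x_def mult_left_le_one_le)
    have "ip x r = reward_above r c p + \<theta> * c * Z"
      unfolding ip_def reward_above_def Z_def mass_at_def sum_distrib_left sum.distrib[symmetric]
      by (rule sum.cong) (auto simp: x_def)
    then show "0 \<le> ip x r"
      using \<theta>(3) by (simp add: algebra_simps)
    have "(\<Sum>w\<in>UNIV. x $ w) = mass_above r c p + \<theta> * Z"
      unfolding mass_above_def Z_def mass_at_def sum_distrib_left sum.distrib[symmetric]
      by (rule sum.cong) (auto simp: x_def)
    then show "(\<Sum>w\<in>UNIV. x $ w) = ip p (cutoff_weight r c)"
      using \<theta>(3) c by (simp add: ip_cutoff_weight field_simps)
  qed
qed

lemma cutoff_set_if_weight_one:
  assumes c: "c < 0" and q: "q \<in> setI r" and one: "ip q (cutoff_weight r c) = 1"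
  shows "q \<in> cutoff_set r c"
proof -
  have qD: "q \<in> DeltaOm" and qr: "0 \<le> ip q r"
    using q by (auto simp: setI_def)
  define d where "d w = q $ w * (cutoff_weight r c w - (1 - r w / c))" for w
  have d_nonneg: "0 \<le> d w" for w
    using DeltaOm_nonneg[OF qD] by (simp add: d_def cutoff_weight_def)
  have "(\<Sum>w\<in>UNIV. d w) = ip q (cutoff_weight r c) - ip q (\<lambda>w. 1 + (- 1 / c) * r w)"
    by (simp add: d_def ip_def algebra_simps sum_subtractf sum.distrib)
  also have "\<dots> = ip q r / c"
    using one ip_affine[of q 1 "- 1 / c" r] DeltaOm_sum[OF qD] by simp
  finally have sum_d: "(\<Sum>w\<in>UNIV. d w) = ip q r / c" .
  moreover have "ip q r / c \<le> 0"
    using c qr by (simp add: divide_nonneg_neg)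
  moreover have "0 \<le> (\<Sum>w\<in>UNIV. d w)"
    using d_nonneg by (simp add: sum_nonneg)
  ultimately have "(\<Sum>w\<in>UNIV. d w) = 0" and "ip q r = 0"
    using c by auto
  then have d_zero: "d w = 0" for w
    using sum_nonneg_eq_0_iff[of UNIV d] d_nonneg by simp
  have below: "q $ w = 0" if "r w < c" for w
  proof -
    have "1 < r w / c"
      using that c by (simp add: less_divide_eq)
    then show ?thesis
      using d_zero[of w] cutoff_weight_below[OF c, of r w] that by (simp add: d_def)
  qed
  have "reward_from r c q = ip q r"
    unfolding reward_from_def ip_def by (rule sum.cong) (auto simp: below)
  moreover have "c * mass_at r c q \<le> 0"
    using c mass_at_nonneg[OF qD] by (simp add: mult_nonpos_nonneg)
  ultimately show ?thesis
    using qD \<open>ip q r = 0\<close> reward_from_eq[of r c q] by (simp add: cutoff_set_def)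
qed

lemma cutoff_set_if_weight_zero:
  assumes c: "c < 0" and qD: "q \<in> DeltaOm" and zero: "ip q (cutoff_weight r c) = 0"
  shows "q \<in> cutoff_set r c"
proof -
  have nonneg: "0 \<le> q $ w * cutoff_weight r c w" for w
    using DeltaOm_nonneg[OF qD] cutoff_weight_nonneg by (blast intro: mult_nonneg_nonneg)
  have "\<forall>w. q $ w * cutoff_weight r c w = 0"
    using zero sum_nonneg_eq_0_iff[of UNIV "\<lambda>w. q $ w * cutoff_weight r c w"] nonneg
    by (simp add: ip_def)
  then have above: "q $ w = 0" if "c < r w" for w
    using that c by (auto simp: cutoff_weight_above divide_less_eq)
  have "reward_above r c q = 0"
    unfolding reward_above_def by (rule sum.neutral) (auto simp: above)
  then show ?thesis
    using qD reward_from_eq[of r c q] mass_at_nonneg[OF qD, of r c] c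
    by (simp add: cutoff_set_def mult_nonpos_nonneg)
qed

lemma reward_from_nonneg: "0 \<le> c \<Longrightarrow> p \<in> DeltaOm \<Longrightarrow> 0 \<le> reward_from r c p"
  unfolding reward_from_def by (intro sum_nonneg) (auto simp: DeltaOm_nonneg)

lemma reward_from_Min: "reward_from r (Min (range r)) p = ip p r"
  by (simp add: reward_from_def ip_def)

lemma reward_above_eq_reward_from_next:
  fixes r :: "'w::finite \<Rightarrow> real"
  assumes "\<exists>w. c < r w"
  obtains c' where "c' \<in> range r" "c < c'" "reward_from r c' p = reward_above r c p"
proof -
  define D where "D = {x \<in> range r. c < x}"
  have "finite D" "D \<noteq> {}"
    using assms by (auto simp: D_def)
  then have "Min D \<in> D" and Min_le_D: "\<And>x. x \<in> D \<Longrightarrow> Min D \<le> x"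
    by auto
  have "Min D \<le> r w \<longleftrightarrow> c < r w" for w
  proof
    assume "Min D \<le> r w"
    then show "c < r w"
      using \<open>Min D \<in> D\<close> by (simp add: D_def)
  next
    assume "c < r w"
    then show "Min D \<le> r w"
      by (intro Min_le_D) (simp add: D_def)
  qed
  then have "reward_from r (Min D) p = reward_above r c p"
    by (simp add: reward_from_def reward_above_def)
  with \<open>Min D \<in> D\<close> show thesis
    by (intro that[of "Min D"]) (simp_all add: D_def)
qed

text \<open>The cutoff is the largest negative reward level c with \<open>reward_from r c m \<le> 0\<close>; the next
  reward level above it is either such a level too or nonnegative.\<close>

lemma exists_cutoff:
  fixes m :: "real^'w::finite"
  assumes m: "m \<in> DeltaOm" and neg: "ip m r < 0"
  obtains c where "c < 0" "m \<in> cutoff_set r c"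
proof -
  define C where "C = {x \<in> range r. x < 0 \<and> reward_from r x m \<le> 0}"
  have "Min (range r) < 0"
  proof (rule ccontr)
    assume "\<not> Min (range r) < 0"
    then have "0 \<le> reward_from r (Min (range r)) m"
      by (intro reward_from_nonneg[OF _ m]) (simp only: not_less)
    then have "0 \<le> ip m r"
      by (simp only: reward_from_Min)
    then show False
      using neg by simp
  qed
  then have "Min (range r) \<in> C"
    using neg by (simp add: C_def reward_from_Min)
  moreover have "finite C"
    unfolding C_def by simp
  ultimately have "Max C \<in> C" and Max_ge_C: "\<And>x. x \<in> C \<Longrightarrow> x \<le> Max C"
    by (auto intro: Max_in)
  have "0 \<le> reward_above r (Max C) m"
  proof (rule ccontr)
    assume above_neg: "\<not> 0 \<le> reward_above r (Max C) m"
    have "\<exists>w. Max C < r w"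
    proof (rule ccontr)
      assume "\<nexists>w. Max C < r w"
      then have "reward_above r (Max C) m = 0"
        by (simp add: reward_above_def)
      then show False
        using above_neg by simp
    qed
    then obtain c' where c': "c' \<in> range r" "Max C < c'" "reward_from r c' m = reward_above r (Max C) m"
      by (rule reward_above_eq_reward_from_next)
    show False
    proof (cases "c' < 0")
      case True
      then have "c' \<in> C"
        using c' above_neg by (simp add: C_def)
      then show False
        using Max_ge_C c'(2) by fastforce
    next
      case False
      then show False
        using reward_from_nonneg[OF _ m, of c' r] c'(3) above_neg by simp
    qed
  qed
  then show thesis
    using that \<open>Max C \<in> C\<close> m by (auto simp: C_def cutoff_set_def)
qed

lemma split_off_submass:
  assumes p: "p \<in> setJ r" and x: "\<forall>w. 0 \<le> x $ w \<and> x $ w \<le> p $ w" "0 \<le> ip x r"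
    and s: "s = (\<Sum>w\<in>UNIV. x $ w)" "0 < s"
  shows "s < 1" "\<exists>q'\<in>setI r. \<exists>q''\<in>DeltaOm. p = s *\<^sub>R q' + (1 - s) *\<^sub>R q''"
proof -
  have pD: "p \<in> DeltaOm" and neg: "ip p r < 0"
    using p by (auto simp: setJ_def setI_def)
  have rest: "(\<Sum>w\<in>UNIV. p $ w - x $ w) = 1 - s"
    using s DeltaOm_sum[OF pD] by (simp add: sum_subtractf)
  have "s \<noteq> 1"
  proof
    assume "s = 1"
    then have "\<forall>w. p $ w - x $ w = 0"
      using rest sum_nonneg_eq_0_iff[of UNIV "\<lambda>w. p $ w - x $ w"] x(1) by simp
    then have "x = p"
      by (simp add: vec_eq_iff)
    then show False
      using x(2) neg by simp
  qed
  moreover have "0 \<le> 1 - s"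
    unfolding rest[symmetric] using x(1) by (simp add: sum_nonneg)
  ultimately show s1: "s < 1"
    by simp
  define q' where "q' = (1 / s) *\<^sub>R x"
  define q'' where "q'' = (1 / (1 - s)) *\<^sub>R (p - x)"
  have "q' \<in> DeltaOm"
    using x(1) s by (auto simp: DeltaOm_def q'_def simp flip: sum_divide_distrib)
  moreover have "ip q' r = (1 / s) * ip x r"
    unfolding q'_def by (rule ip_scaleR)
  ultimately have "q' \<in> setI r"
    using x(2) s by (simp add: setI_def)
  moreover have "q'' \<in> DeltaOm"
    using x(1) s1 rest by (auto simp: DeltaOm_def q''_def simp flip: sum_divide_distrib)
  moreover have "p = s *\<^sub>R q' + (1 - s) *\<^sub>R q''"
    using s s1 by (simp add: q'_def q''_def vec_eq_iff field_simps)
  ultimately show "\<exists>q'\<in>setI r. \<exists>q''\<in>DeltaOm. p = s *\<^sub>R q' + (1 - s) *\<^sub>R q''"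
    by blast
qed

text \<open>The greedy weight \<open>a\<^sub>I\<close> is at least \<open>\<langle>p, g\<rangle>\<close>, because the cutoff part of p can be split off,
  and at most \<open>\<langle>p, g\<rangle> = a\<^sub>I \<langle>q\<^sub>I, g\<rangle> + a\<^sub>J \<langle>q\<^sub>J, g\<rangle>\<close>, because \<open>\<langle>q\<^sub>I, g\<rangle> \<ge> 1\<close>; equality pins down
  both posteriors.\<close>

lemma greedy_split_on_cutoff_set:
  fixes p :: "real^'w::finite"
  assumes c: "c < 0" and pK: "p \<in> cutoff_set r c" and pJ: "p \<in> setJ r"
    and a: "0 \<le> aI" "0 \<le> aJ" "aI + aJ = 1" and qI: "qI \<in> setI r" and qJ: "qJ \<in> DeltaOm"
    and split: "p = aI *\<^sub>R qI + aJ *\<^sub>R qJ"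
    and max: "\<forall>a' b' q' q''. 0 \<le> a' \<and> 0 \<le> b' \<and> a' + b' = 1 \<and> q' \<in> setI r \<and> q'' \<in> DeltaOm \<and>
               p = a' *\<^sub>R q' + b' *\<^sub>R q'' \<longrightarrow> a' \<le> aI"
  shows "aI \<noteq> 0 \<Longrightarrow> ip qI (cutoff_weight r c) = 1" "aJ \<noteq> 0 \<Longrightarrow> ip qJ (cutoff_weight r c) = 0"
proof -
  define s where "s = ip p (cutoff_weight r c)"
  obtain x :: "real^'w" where x: "\<forall>w. 0 \<le> x $ w \<and> x $ w \<le> p $ w" "0 \<le> ip x r"
    and sum_x: "(\<Sum>w\<in>UNIV. x $ w) = s"
    using cutoff_set_submass[OF c pK] unfolding s_def by blast
  have "s \<le> aI"
  proof (cases "s = 0")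
    case False
    then have s: "0 < s"
      using x(1) sum_x sum_nonneg[of UNIV "\<lambda>w. x $ w"] by force
    then obtain q' q'' where "q' \<in> setI r" "q'' \<in> DeltaOm" "p = s *\<^sub>R q' + (1 - s) *\<^sub>R q''"
      using split_off_submass(2)[OF pJ x sum_x[symmetric]] by blast
    then show ?thesis
      using max[rule_format, of s "1 - s" q' q''] s split_off_submass(1)[OF pJ x sum_x[symmetric] s]
      by simp
  qed (use a in simp)
  moreover have "aI * (ip qI (cutoff_weight r c) - 1) + aJ * ip qJ (cutoff_weight r c) = s - aI"
    unfolding s_def split ip_lincomb by (simp add: algebra_simps)
  moreover have "0 \<le> aI * (ip qI (cutoff_weight r c) - 1)"
    using a ip_cutoff_weight_ge_one[OF c qI] by simp
  moreover have "0 \<le> aJ * ip qJ (cutoff_weight r c)"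
    using a(2) ip_nonneg[OF qJ] cutoff_weight_nonneg by (blast intro: mult_nonneg_nonneg)
  ultimately have "aI * (ip qI (cutoff_weight r c) - 1) = 0" "aJ * ip qJ (cutoff_weight r c) = 0"
    by linarith+
  then show "aI \<noteq> 0 \<Longrightarrow> ip qI (cutoff_weight r c) = 1" "aJ \<noteq> 0 \<Longrightarrow> ip qJ (cutoff_weight r c) = 0"
    by simp_all
qed

lemma ip_cutoff_weight_le_one:
  fixes p :: "real^'w::finite"
  assumes c: "c < 0" and p: "p \<in> cutoff_set r c"
  shows "ip p (cutoff_weight r c) \<le> 1"
proof -
  obtain x :: "real^'w" where "\<forall>w. 0 \<le> x $ w \<and> x $ w \<le> p $ w"
    and "(\<Sum>w\<in>UNIV. x $ w) = ip p (cutoff_weight r c)"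
    using cutoff_set_submass[OF c p] by blast
  then show ?thesis
    using p sum_mono[of UNIV "\<lambda>w. x $ w" "\<lambda>w. p $ w"] by (auto simp: cutoff_set_def DeltaOm_sum)
qed

definition tight_cutoff_set :: "('w::finite \<Rightarrow> real) \<Rightarrow> real \<Rightarrow> (real^'w) set" where
  "tight_cutoff_set r c = {q \<in> cutoff_set r c. indicator (setI r) q = ip q (cutoff_weight r c)}"

lemma tight_cutoff_set_borel [measurable]:
  "tight_cutoff_set r c \<in> sets (borel :: (real^'w::finite) measure)"
  unfolding tight_cutoff_set_def cutoff_set_def reward_above_def reward_from_def DeltaOm_def ip_def
  by measurable

lemma AE_greedy_choice_tight_cutoff_set:
  fixes \<mu> :: "(real^'w::finite) measure"
  assumes c: "c < 0" and p: "p \<in> cutoff_set r c"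
    and sets: "sets \<mu> = sets borel" and choice: "greedy_choice r p \<mu>"
  shows "AE q in \<mu>. q \<in> tight_cutoff_set r c"
proof (cases "p \<in> setI r")
  case True
  then have "p \<in> tight_cutoff_set r c"
    using ip_cutoff_weight_ge_one[OF c True] ip_cutoff_weight_le_one[OF c p] p
    by (simp add: tight_cutoff_set_def)
  moreover have \<mu>: "\<mu> = return borel p"
    using choice True by (simp add: greedy_choice_def)
  ultimately show ?thesis
    unfolding \<mu> by (intro AE_return_borel) simp_all
next
  case False
  then have pJ: "p \<in> setJ r"
    using p by (simp add: setJ_def cutoff_set_def)
  then obtain aI aJ qI qJ where a: "0 \<le> aI" "0 \<le> aJ" "aI + aJ = 1"
    and qI: "qI \<in> setI r" and qJ: "qJ \<in> DeltaOm" and split: "p = aI *\<^sub>R qI + aJ *\<^sub>R qJ"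
    and max: "\<forall>a' b' q' q''. 0 \<le> a' \<and> 0 \<le> b' \<and> a' + b' = 1 \<and> q' \<in> setI r \<and> q'' \<in> DeltaOm \<and>
           p = a' *\<^sub>R q' + b' *\<^sub>R q'' \<longrightarrow> a' \<le> aI"
    and two_point: "\<forall>A\<in>sets borel. emeasure \<mu> A = ennreal (aI * indicator A qI + aJ * indicator A qJ)"
    using choice by (auto simp: greedy_choice_def)
  note weights = greedy_split_on_cutoff_set[OF c p pJ a qI qJ split max]
  show ?thesis
  proof (rule AE_two_point[OF sets _ two_point])
    assume "aI \<noteq> 0"
    then show "qI \<in> tight_cutoff_set r c"
      using weights(1) cutoff_set_if_weight_one[OF c qI] qI by (simp add: tight_cutoff_set_def)
  next
    assume "aJ \<noteq> 0"
    then have "ip qJ (cutoff_weight r c) = 0"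
      by (rule weights(2))
    moreover from this have "qJ \<notin> setI r"
      using ip_cutoff_weight_ge_one[OF c] by force
    ultimately show "qJ \<in> tight_cutoff_set r c"
      using cutoff_set_if_weight_zero[OF c qJ] by (simp add: tight_cutoff_set_def)
  qed simp
qed

lemma greedy_optimal_trans_matrix_in_setJ:
  fixes m :: "real^'w::finite"
  assumes m: "m \<in> setJ r" and lam: "0 \<le> lam" "lam \<le> 1" and d: "0 \<le> \<delta>" "\<delta> < 1"
    and greedy: "greedy (trans_matrix m lam) m r \<sigma>"
  shows "optimal (trans_matrix m lam) m r \<delta> \<sigma>"
proof -
  have mD: "m \<in> DeltaOm" and neg: "ip m r < 0"
    using m by (auto simp: setJ_def setI_def)
  obtain c where c: "c < 0" and mK: "m \<in> cutoff_set r c"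
    using exists_cutoff[OF mD neg] by blast
  have tight: "AE h in law \<sigma> n. \<forall>i<n. h i \<in> tight_cutoff_set r c" for n
  proof (rule AE_law_greedy_invariant[OF greedy tight_cutoff_set_borel _ mK])
    show "tight_cutoff_set r c \<subseteq> DeltaOm"
      by (auto simp: tight_cutoff_set_def cutoff_set_def)
    show "phi (trans_matrix m lam) q \<in> cutoff_set r c" if "q \<in> tight_cutoff_set r c" for q
      using that mK lam convexD[OF convex_cutoff_set, of m r c q "1 - lam" lam]
      by (simp add: tight_cutoff_set_def phi_trans_matrix cutoff_set_def)
  qed (rule AE_greedy_choice_tight_cutoff_set[OF c])
  show ?thesis
  proof (rule optimal_if_majorant_attained[OF trans_matrix_stochastic[OF mD lam]
        phi_trans_matrix_fixed[OF mD] mD d])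
    show "\<forall>w. 0 \<le> cutoff_weight r c w"
      by (simp add: cutoff_weight_nonneg)
    show "\<forall>q\<in>setI r. 1 \<le> ip q (cutoff_weight r c)"
      using ip_cutoff_weight_ge_one[OF c] by blast
    show "admissible (trans_matrix m lam) m \<sigma>"
      using greedy by (simp add: greedy_def)
    show "AE h in law \<sigma> (Suc n). indicator (setI r) (h n) = ip (h n) (cutoff_weight r c)" for n
      using tight[of "Suc n"] by eventually_elim (simp add: tight_cutoff_set_def)
  qed
qed

theorem theorem2:
  fixes m :: "real^'w::finite" and lam \<delta> :: real and r :: "'w \<Rightarrow> real"
  assumes "m \<in> DeltaOm"
    and "0 \<le> lam" and "lam < 1"
    and "irreducible_chain (trans_matrix m lam)"
    and "0 \<le> \<delta>" and "\<delta> < 1"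
  shows "\<forall>\<sigma>. greedy (trans_matrix m lam) m r \<sigma> \<longrightarrow> optimal (trans_matrix m lam) m r \<delta> \<sigma>"
proof (intro allI impI)
  fix \<sigma> assume greedy: "greedy (trans_matrix m lam) m r \<sigma>"
  have lam: "0 \<le> lam" "lam \<le> 1"
    using assms by simp_all
  show "optimal (trans_matrix m lam) m r \<delta> \<sigma>"
  proof (cases "m \<in> setI r")
    case True
    show ?thesis
      by (rule greedy_optimal_if_invariant_in_setI[OF trans_matrix_stochastic[OF assms(1) lam]
            phi_trans_matrix_fixed[OF assms(1)] True assms(5,6) greedy])
  next
    case False
    then have "m \<in> setJ r"
      using assms(1) by (simp add: setJ_def)
    then show ?thesis
      by (rule greedy_optimal_trans_matrix_in_setJ[OF _ lam assms(5,6) greedy])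
  qed
qed

end
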